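(* Let $\nu$ be a bounded continuous valuation on $\mathbb N_{\rm cof}$. Then there exist a discrete valuation $\alpha$ on $\mathbb N_{\rm cof}$ and a nonnegative real number $r$ such that $\nu=\alpha+r\beta$, where $\beta(U)=1$ for every non-empty open $U\subseteq\mathbb N_{\rm cof}$ and $\beta(\emptyset)=0$.
   Context: $\mathbb N_{\rm cof}$ is the set of natural numbers with the cofinite topology (open sets are $\emptyset$ and the complements of finite sets). A valuation on a space $X$ is a map $\nu:\mathcal OX\to[0,\infty]$ with $\nu(\emptyset)=0$, monotone and modular; continuous if it preserves directed suprema of opens; bounded if $\nu(X)<\infty$. A discrete valuation is one of the form $\sum_{i=1}^\infty r_i\delta_{x_i}$ ($r_i\in[0,\infty)$, $\delta_x$ the Dirac valuation at $x$), the supremum of its partial sums. *)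

theory Defs
  imports "HOL-Analysis.Analysis"
begin

definition cof_open :: "nat set \<Rightarrow> bool" where
  "cof_open U \<longleftrightarrow> U = {} \<or> finite (UNIV - U)"

text \<open>Valuations on N_cof, represented as functions on all sets of naturals;
  only their values on open sets matter.\<close>
definition cof_valuation :: "(nat set \<Rightarrow> ennreal) \<Rightarrow> bool" where
  "cof_valuation \<nu> \<longleftrightarrow>
     \<nu> {} = 0
   \<and> (\<forall>U V. cof_open U \<longrightarrow> cof_open V \<longrightarrow> U \<subseteq> V \<longrightarrow> \<nu> U \<le> \<nu> V)
   \<and> (\<forall>U V. cof_open U \<longrightarrow> cof_open V \<longrightarrow> \<nu> (U \<union> V) + \<nu> (U \<inter> V) = \<nu> U + \<nu> V)"

definition cof_directed :: "nat set set \<Rightarrow> bool" where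
  "cof_directed D \<longleftrightarrow> D \<noteq> {} \<and> (\<forall>U\<in>D. cof_open U)
     \<and> (\<forall>U\<in>D. \<forall>V\<in>D. \<exists>W\<in>D. U \<subseteq> W \<and> V \<subseteq> W)"

definition cof_continuous_valuation :: "(nat set \<Rightarrow> ennreal) \<Rightarrow> bool" where
  "cof_continuous_valuation \<nu> \<longleftrightarrow> cof_valuation \<nu>
     \<and> (\<forall>D. cof_directed D \<longrightarrow> \<nu> (\<Union>D) = (SUP U\<in>D. \<nu> U))"

definition cof_bounded :: "(nat set \<Rightarrow> ennreal) \<Rightarrow> bool" where
  "cof_bounded \<nu> \<longleftrightarrow> \<nu> UNIV < \<infinity>"

definition cof_discrete_valuation :: "(nat set \<Rightarrow> ennreal) \<Rightarrow> bool" where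
  "cof_discrete_valuation \<alpha> \<longleftrightarrow>
     (\<exists>(r::nat \<Rightarrow> real) (x::nat \<Rightarrow> nat). (\<forall>i. 0 \<le> r i) \<and>
        (\<forall>U. cof_open U \<longrightarrow> \<alpha> U = (\<Sum>i. ennreal (r i) * indicator U (x i))))"

definition cof_beta :: "nat set \<Rightarrow> ennreal" where
  "cof_beta U = (if U = {} then 0 else 1)"

end

theory Submission
  imports Defs
begin

text \<open>Every nonempty open set of \<open>\<nat>\<^sub>c\<^sub>o\<^sub>f\<close> is \<open>-F\<close> for a finite \<open>F\<close>, and modularity applied
  to \<open>-F\<close> and \<open>-{m}\<close> shows that removing a point \<open>m\<close> always costs the same mass
  \<open>a m = \<nu> \<nat> - \<nu> (-{m})\<close>. Hence \<open>\<nu> (-F) = \<nu> \<nat> - (\<Sum>m\<in>F. a m)\<close>; boundedness makes \<open>a\<close>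
  summable, and \<open>\<nu>\<close> is the discrete valuation \<open>\<Sum>m. a m \<delta>\<^sub>m\<close> plus the constant
  \<open>r = \<nu> \<nat> - (\<Sum>m. a m)\<close> on nonempty opens.\<close>

lemma cof_open_Compl_finite: "finite F \<Longrightarrow> cof_open (- F)"
  unfolding cof_open_def by simp

lemma cof_open_nonemptyE:
  assumes "cof_open U" "U \<noteq> {}"
  obtains F where "finite F" "U = - F"
  using assms unfolding cof_open_def by (metis Compl_eq_Diff_UNIV double_compl)

lemma cof_valuation_mono:
  "cof_valuation \<nu> \<Longrightarrow> cof_open U \<Longrightarrow> cof_open V \<Longrightarrow> U \<subseteq> V \<Longrightarrow> \<nu> U \<le> \<nu> V"
  unfolding cof_valuation_def by blast

lemma cof_valuation_modular:
  "cof_valuation \<nu> \<Longrightarrow> cof_open U \<Longrightarrow> cof_open V \<Longrightarrow> \<nu> (U \<union> V) + \<nu> (U \<inter> V) = \<nu> U + \<nu> V"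
  unfolding cof_valuation_def by blast

lemma cof_bounded_valuation_finite:
  assumes "cof_valuation \<nu>" "cof_bounded \<nu>" "cof_open U"
  shows "\<nu> U < top"
proof -
  have "\<nu> U \<le> \<nu> UNIV"
    using cof_valuation_mono[OF assms(1,3) cof_open_Compl_finite[of "{}"]] by simp
  then show ?thesis
    using assms(2) unfolding cof_bounded_def infinity_ennreal_def by (rule le_less_trans)
qed

definition cof_atom :: "(nat set \<Rightarrow> ennreal) \<Rightarrow> nat \<Rightarrow> real" where
  "cof_atom \<nu> m = enn2real (\<nu> UNIV) - enn2real (\<nu> (- {m}))"

lemma cof_atom_nonneg:
  assumes "cof_valuation \<nu>" "cof_bounded \<nu>"
  shows "0 \<le> cof_atom \<nu> m"
proof -
  have "\<nu> (- {m}) \<le> \<nu> UNIV"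
    using cof_valuation_mono[OF assms(1) cof_open_Compl_finite cof_open_Compl_finite[of "{}"]]
    by simp
  then have "enn2real (\<nu> (- {m})) \<le> enn2real (\<nu> UNIV)"
    using assms(2) unfolding cof_bounded_def by (simp add: enn2real_mono)
  then show ?thesis unfolding cof_atom_def by simp
qed

lemma cof_valuation_Compl_finite:
  assumes "cof_valuation \<nu>" "cof_bounded \<nu>" "finite F"
  shows "enn2real (\<nu> (- F)) = enn2real (\<nu> UNIV) - (\<Sum>m\<in>F. cof_atom \<nu> m)"
  using assms(3)
proof (induction F rule: finite_induct)
  case empty
  show ?case by simp
next
  case (insert m F)
  let ?real = "\<lambda>U. enn2real (\<nu> U)"
  have real_eq: "ennreal (?real (- G)) = \<nu> (- G)" if "finite G" for G
    using cof_bounded_valuation_finite[OF assms(1,2) cof_open_Compl_finite[OF that]]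
    by (rule ennreal_enn2real)
  have "- F \<union> - {m} = UNIV" "- F \<inter> - {m} = - insert m F"
    using insert.hyps(2) by auto
  then have "\<nu> UNIV + \<nu> (- insert m F) = \<nu> (- F) + \<nu> (- {m})"
    using cof_valuation_modular[OF assms(1) cof_open_Compl_finite[OF insert.hyps(1)]
        cof_open_Compl_finite[of "{m}"]] by simp
  then have "ennreal (?real UNIV) + ennreal (?real (- insert m F))
      = ennreal (?real (- F)) + ennreal (?real (- {m}))"
    using insert.hyps(1) real_eq[of "{}"] real_eq[of "insert m F"] real_eq[of F] real_eq[of "{m}"]
    by simp
  then have "?real UNIV + ?real (- insert m F) = ?real (- F) + ?real (- {m})"
    by (metis ennreal_plus ennreal_inj enn2real_nonneg add_nonneg_nonneg)
  then show ?case
    using insert by (simp add: cof_atom_def)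
qed

lemma cof_atom_summable:
  assumes "cof_valuation \<nu>" "cof_bounded \<nu>"
  shows "summable (cof_atom \<nu>)" and "(\<Sum>m. cof_atom \<nu> m) \<le> enn2real (\<nu> UNIV)"
proof -
  have partial_sums: "(\<Sum>m<n. cof_atom \<nu> m) \<le> enn2real (\<nu> UNIV)" for n
    using cof_valuation_Compl_finite[OF assms, of "{..<n}"] enn2real_nonneg[of "\<nu> (- {..<n})"]
    by simp
  show "summable (cof_atom \<nu>)"
    using summableI_nonneg_bounded[OF cof_atom_nonneg[OF assms] partial_sums] .
  then show "(\<Sum>m. cof_atom \<nu> m) \<le> enn2real (\<nu> UNIV)"
    using suminf_le_const partial_sums by blast
qed

lemma suminf_ennreal_indicator_Compl_finite:
  fixes a :: "nat \<Rightarrow> real"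
  assumes "\<And>i. 0 \<le> a i" "summable a" "finite F"
  shows "(\<Sum>i. ennreal (a i) * indicator (- F) i) = ennreal ((\<Sum>i. a i) - (\<Sum>i\<in>F. a i))"
proof -
  have split: "a i * indicator (- F) i = a i - a i * indicator F i" for i
    by (simp add: indicator_def)
  have finite_part: "(\<lambda>i. a i * indicator F i) sums (\<Sum>i\<in>F. a i)"
    using sums_finite[OF assms(3), of "\<lambda>i. a i * indicator F i"] by (simp add: indicator_def)
  have sums: "(\<lambda>i. a i * indicator (- F) i) sums ((\<Sum>i. a i) - (\<Sum>i\<in>F. a i))"
    unfolding split using sums_diff[OF summable_sums[OF assms(2)] finite_part] .
  have "(\<Sum>i. ennreal (a i) * indicator (- F) i) = (\<Sum>i. ennreal (a i * indicator (- F) i))"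
    by (intro suminf_cong) (simp add: indicator_def)
  also have "\<dots> = ennreal (\<Sum>i. a i * indicator (- F) i)"
    using assms(1) by (intro suminf_ennreal2 sums_summable[OF sums]) (simp add: indicator_def)
  finally show ?thesis
    using sums_unique[OF sums] by simp
qed

lemma cof_bounded_valuation_decomposition:
  assumes "cof_valuation \<nu>" "cof_bounded \<nu>" "cof_open U"
  shows "\<nu> U = (\<Sum>i. ennreal (cof_atom \<nu> i) * indicator U i)
                + ennreal (enn2real (\<nu> UNIV) - (\<Sum>i. cof_atom \<nu> i)) * cof_beta U"
proof (cases "U = {}")
  case True
  then show ?thesis
    using assms(1) by (simp add: cof_valuation_def cof_beta_def)
next
  case False
  then obtain F where F: "finite F" "U = - F"
    using cof_open_nonemptyE[OF assms(3)] by blast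
  let ?S = "\<Sum>i. cof_atom \<nu> i" and ?N = "enn2real (\<nu> UNIV)" and ?A = "\<Sum>i\<in>F. cof_atom \<nu> i"
  have "(\<Sum>i. ennreal (cof_atom \<nu> i) * indicator U i) = ennreal (?S - ?A)"
    using suminf_ennreal_indicator_Compl_finite[OF cof_atom_nonneg[OF assms(1,2)]
        cof_atom_summable(1)[OF assms(1,2)] F(1)] F(2) by simp
  moreover have "?A \<le> ?S"
    using sum_le_suminf[OF cof_atom_summable(1)[OF assms(1,2)] F(1)]
      cof_atom_nonneg[OF assms(1,2)] by blast
  moreover have "\<nu> U = ennreal (?N - ?A)"
    using ennreal_enn2real[OF cof_bounded_valuation_finite[OF assms]]
      cof_valuation_Compl_finite[OF assms(1,2) F(1)] F(2)
    by simp
  ultimately show ?thesis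
    using False cof_atom_summable(2)[OF assms(1,2)]
    by (simp add: cof_beta_def ennreal_plus[symmetric])
qed

theorem proposition3p2:
  fixes \<nu> :: "nat set \<Rightarrow> ennreal"
  assumes "cof_continuous_valuation \<nu>"
    and "cof_bounded \<nu>"
  shows "\<exists>\<alpha> (r::real). cof_discrete_valuation \<alpha> \<and> 0 \<le> r \<and>
           (\<forall>U. cof_open U \<longrightarrow> \<nu> U = \<alpha> U + ennreal r * cof_beta U)"
proof -
  have val: "cof_valuation \<nu>"
    using assms(1) unfolding cof_continuous_valuation_def by simp
  define \<alpha> where "\<alpha> U = (\<Sum>i. ennreal (cof_atom \<nu> i) * indicator U i)" for U :: "nat set"
  define r where "r = enn2real (\<nu> UNIV) - (\<Sum>i. cof_atom \<nu> i)"
  have "cof_discrete_valuation \<alpha>"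
    unfolding cof_discrete_valuation_def \<alpha>_def
    using cof_atom_nonneg[OF val assms(2)] by (intro exI[of _ "cof_atom \<nu>"] exI[of _ id]) simp
  moreover have "0 \<le> r"
    using cof_atom_summable(2)[OF val assms(2)] unfolding r_def by simp
  moreover have "\<forall>U. cof_open U \<longrightarrow> \<nu> U = \<alpha> U + ennreal r * cof_beta U"
    using cof_bounded_valuation_decomposition[OF val assms(2)] unfolding \<alpha>_def r_def by blast
  ultimately show ?thesis by blast
qed

end
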